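(* For every default ABMN solution, the central ratio $\frac{n_{-1}-n_0}{m_0-m_{-1}}$ lies in $(0,\infty)$. For every $x\in(0,\infty)$ there is exactly one default ABMN solution whose central ratio equals $x$.
   Context: ABMN system on $\mathbb{Z}$: real variables $a_i,b_i\ge0$, $m_i,n_i$ with, for all $i$, $(a_i+b_i)(m_i+a_i)=a_im_{i+1}+b_im_{i-1}$, $(a_i+b_i)(n_i+b_i)=a_in_{i+1}+b_in_{i-1}$, $(a_i+b_i)^2=b_i(m_{i+1}-m_{i-1})$, $(a_i+b_i)^2=a_i(n_{i-1}-n_{i+1})$. Solutions considered are positive ($a_i,b_i>0$ for all $i$), so $m_{\pm\infty}=\lim_{i\to\pm\infty}m_i$, $n_{\pm\infty}=\lim_{i\to\pm\infty}n_i$ exist in $\mathbb{R}$. A (positive) solution is default if $m_{-\infty}=0$, $n_\infty=0$ and $m_0-m_{-1}=1$. The central ratio is $\frac{n_{-1}-n_0}{m_0-m_{-1}}$. *)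

theory Defs
  imports "HOL-Analysis.Analysis"
begin

definition ABMN :: "(int \<Rightarrow> real) \<Rightarrow> (int \<Rightarrow> real) \<Rightarrow> (int \<Rightarrow> real) \<Rightarrow> (int \<Rightarrow> real) \<Rightarrow> bool" where
  "ABMN a b m n \<longleftrightarrow> (\<forall>i. a i \<ge> 0 \<and> b i \<ge> 0 \<and>
      (a i + b i) * (m i + a i) = a i * m (i+1) + b i * m (i-1) \<and>
      (a i + b i) * (n i + b i) = a i * n (i+1) + b i * n (i-1) \<and>
      (a i + b i)^2 = b i * (m (i+1) - m (i-1)) \<and>
      (a i + b i)^2 = a i * (n (i-1) - n (i+1)))"

definition positive_ABMN :: "(int \<Rightarrow> real) \<Rightarrow> (int \<Rightarrow> real) \<Rightarrow> (int \<Rightarrow> real) \<Rightarrow> (int \<Rightarrow> real) \<Rightarrow> bool" where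
  "positive_ABMN a b m n \<longleftrightarrow> ABMN a b m n \<and> (\<forall>i. a i > 0 \<and> b i > 0)"

definition default_ABMN :: "(int \<Rightarrow> real) \<Rightarrow> (int \<Rightarrow> real) \<Rightarrow> (int \<Rightarrow> real) \<Rightarrow> (int \<Rightarrow> real) \<Rightarrow> bool" where
  "default_ABMN a b m n \<longleftrightarrow> positive_ABMN a b m n \<and>
      (m \<longlongrightarrow> 0) at_bot \<and> (n \<longlongrightarrow> 0) at_top \<and> m 0 - m (-1) = 1"

definition central_ratio :: "(int \<Rightarrow> real) \<Rightarrow> (int \<Rightarrow> real) \<Rightarrow> real" where
  "central_ratio m n = (n (-1) - n 0) / (m 0 - m (-1))"

end

theory Submission
  imports Defs
begin

text \<open>For positive a i, b i the four equations at index i say exactly that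
  m (i+1) - m i = 2 a i + b i,  m i - m (i-1) = a i^2 / b i,
  n (i-1) - n i = a i + 2 b i  and  n i - n (i+1) = b i^2 / a i.
  Reading each increment off at both of its endpoints gives a relation between consecutive
  pairs (a i, b i) and (a (i+1), b (i+1)) which, after solving a quadratic, is a bijection of
  the open quadrant. Hence a positive solution is determined by (a 0, b 0) up to additive
  constants in m and n, and these are fixed by the limits of a default solution. The
  normalisation m 0 - m (-1) = 1 forces b 0 = a 0^2, so the central ratio is a 0 + 2 a 0^2,
  which takes every positive value exactly once.

  Conversely every bi-infinite chain of the relation yields a solution: the ratio
  t i = a i / b i satisfies t (i+1)^2 / (t (i+1) + 2) = t i (2 t i + 1), so it grows
  geometrically forward and decays geometrically backward. This makes the m-increments
  summable towards -\<infinity> and the n-increments towards +\<infinity>, and m, n are taken to be the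
  corresponding tail sums.\<close>

lemma quadratic_pos_root_exists:
  fixes P Q :: real
  assumes "0 < P" "0 < Q"
  shows "\<exists>y. 0 < y \<and> y < Q \<and> 2 * y^2 + P * y = P * Q"
proof -
  define s where "s = sqrt (P^2 + 8 * P * Q)"
  have s2: "s^2 = P^2 + 8 * P * Q"
    unfolding s_def using assms by simp
  have "sqrt (P^2) < s"
    unfolding s_def using assms by (intro real_sqrt_less_mono) auto
  then have "P < s"
    using assms by simp
  then have y: "0 < (s - P) / 4 \<and> 2 * ((s - P) / 4)^2 + P * ((s - P) / 4) = P * Q"
    using s2 by (auto simp: power2_eq_square field_simps)
  moreover have "P * ((s - P) / 4) < P * Q"
    using y assms by (smt (verit) zero_less_power)
  ultimately show ?thesis
    using assms by (intro exI[of _ "(s - P) / 4"]) simp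
qed

lemma quadratic_pos_root_unique:
  fixes P y z :: real
  assumes "0 < P" "0 < y" "0 < z" "2 * y^2 + P * y = 2 * z^2 + P * z"
  shows "y = z"
proof -
  have "(y - z) * (2 * (y + z) + P) = 0"
    using assms(4) by (simp add: power2_eq_square algebra_simps)
  moreover have "2 * (y + z) + P > 0"
    using assms by simp
  ultimately show ?thesis
    by simp
qed

lemma linear_increments_unique:
  fixes a b p q :: real
  assumes "0 < a" "0 < b" "a * p - b * q = a * (a + b)" "b * (p + q) = (a + b)^2"
  shows "p = 2 * a + b \<and> q = a^2 / b"
proof -
  have "(a + b) * (b * q) = a * (b * (p + q)) - b * (a * p - b * q)"
    by (simp add: algebra_simps)
  also have "\<dots> = (a + b) * a^2"
    using assms(3,4) by (simp add: algebra_simps power2_eq_square)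
  finally have "(a + b) * (b * q) = (a + b) * a^2" .
  then have "b * q = a^2"
    using assms(1,2) by simp
  then have q: "q = a^2 / b"
    using assms(2) by (simp add: eq_divide_eq mult.commute)
  then have "b * p = b * (2 * a + b)"
    using assms(2,4) by (simp add: algebra_simps power2_eq_square)
  then show ?thesis
    using q assms(2) by simp
qed

lemma abmn_equations_iff_increments:
  fixes a b m0 mp mm n0 np nm :: real
  assumes "0 < a" "0 < b"
  shows "((a + b) * (m0 + a) = a * mp + b * mm \<and> (a + b) * (n0 + b) = a * np + b * nm \<and>
          (a + b)^2 = b * (mp - mm) \<and> (a + b)^2 = a * (nm - np)) \<longleftrightarrow>
         (mp - m0 = 2 * a + b \<and> m0 - mm = a^2 / b \<and> nm - n0 = a + 2 * b \<and> n0 - np = b^2 / a)"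
    (is "?equations \<longleftrightarrow> ?increments")
proof
  assume ?equations
  then show ?increments
    using linear_increments_unique[of a b "mp - m0" "m0 - mm"]
      linear_increments_unique[of b a "nm - n0" "n0 - np"] assms
    by (simp add: algebra_simps)
next
  assume ?increments
  then show ?equations
    using assms by (simp add: field_simps power2_eq_square)
qed

lemma positive_ABMN_iff_increments:
  "positive_ABMN a b m n \<longleftrightarrow> (\<forall>i. 0 < a i \<and> 0 < b i \<and>
     m (i + 1) - m i = 2 * a i + b i \<and> m i - m (i - 1) = a i^2 / b i \<and>
     n (i - 1) - n i = a i + 2 * b i \<and> n i - n (i + 1) = b i^2 / a i)"
  unfolding positive_ABMN_def ABMN_def all_conj_distrib[symmetric]
  using abmn_equations_iff_increments by (intro all_cong1) (blast intro: less_imp_le)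

text \<open>Equivalently a'^2 / b' = 2 a + b and b^2 / a = a' + 2 b': the increments of m and n between
  two consecutive indices are the same whether read off at the first or at the second index.\<close>
definition abmn_step :: "real \<Rightarrow> real \<Rightarrow> real \<Rightarrow> real \<Rightarrow> bool" where
  "abmn_step a b a' b' \<longleftrightarrow> 0 < a \<and> 0 < b \<and> 0 < a' \<and> 0 < b' \<and>
     a'^2 = b' * (2 * a + b) \<and> a * (a' + 2 * b') = b^2"

lemma abmn_step_successor_exists:
  fixes a b :: real
  assumes "0 < a" "0 < b"
  shows "\<exists>a' b'. abmn_step a b a' b'"
proof -
  define P where "P = 2 * a + b"
  have P: "0 < P" "0 < b^2 / a"
    using assms by (auto simp: P_def)
  obtain a' where a': "0 < a'" "2 * a'^2 + P * a' = P * (b^2 / a)"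
    using quadratic_pos_root_exists[OF P] by blast
  define b' where "b' = a'^2 / P"
  have "a' + 2 * b' = (2 * a'^2 + P * a') / P"
    using P by (simp add: b'_def field_simps)
  also have "\<dots> = b^2 / a"
    using a'(2) P by simp
  finally have "a * (a' + 2 * b') = b^2"
    using assms by simp
  moreover have "a'^2 = b' * (2 * a + b)" "0 < b'"
    using P a' by (simp_all add: b'_def P_def)
  ultimately show ?thesis
    using a' assms unfolding abmn_step_def by blast
qed

lemma abmn_step_predecessor_exists:
  fixes a' b' :: real
  assumes "0 < a'" "0 < b'"
  shows "\<exists>a b. abmn_step a b a' b'"
proof -
  define Q where "Q = a' + 2 * b'"
  have Q: "0 < Q" "0 < a'^2 / b'"
    using assms by (auto simp: Q_def)
  obtain b where b: "0 < b" "b < a'^2 / b'" "2 * b^2 + Q * b = Q * (a'^2 / b')"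
    using quadratic_pos_root_exists[OF Q] by blast
  define a where "a = (a'^2 / b' - b) / 2"
  have "a * Q = b^2"
    using b(3) by (simp add: a_def algebra_simps)
  moreover have "0 < a"
    using b(2) by (simp add: a_def)
  moreover have "a'^2 = b' * (2 * a + b)"
  proof -
    have "2 * a + b = a'^2 / b'"
      by (simp add: a_def field_simps)
    then show ?thesis
      using assms by simp
  qed
  ultimately show ?thesis
    using b assms unfolding abmn_step_def Q_def by (metis mult.commute)
qed

lemma abmn_step_successor_unique:
  assumes "abmn_step a b a1 b1" "abmn_step a b a2 b2"
  shows "a1 = a2 \<and> b1 = b2"
proof -
  define P where "P = 2 * a + b"
  have key: "2 * a'^2 + P * a' = P * (b^2 / a)" if "abmn_step a b a' b'" for a' b'
  proof -
    have "b^2 / a = a' + 2 * b'" "a'^2 = b' * P"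
      using that by (auto simp: abmn_step_def P_def field_simps)
    then show ?thesis
      by (simp add: algebra_simps)
  qed
  have "0 < P" "0 < a1" "0 < a2"
    using assms by (auto simp: abmn_step_def P_def)
  then have "a1 = a2"
    using quadratic_pos_root_unique key[OF assms(1)] key[OF assms(2)] by simp
  then show ?thesis
    using assms by (auto simp: abmn_step_def)
qed

lemma abmn_step_predecessor_unique:
  assumes "abmn_step a1 b1 a' b'" "abmn_step a2 b2 a' b'"
  shows "a1 = a2 \<and> b1 = b2"
proof -
  define Q where "Q = a' + 2 * b'"
  have key: "2 * b^2 + Q * b = Q * (a'^2 / b')" if "abmn_step a b a' b'" for a b
  proof -
    have "a'^2 / b' = 2 * a + b" "b^2 = a * Q"
      using that by (auto simp: abmn_step_def Q_def field_simps)
    then show ?thesis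
      by (simp add: algebra_simps)
  qed
  have "0 < Q" "0 < b1" "0 < b2"
    using assms by (auto simp: abmn_step_def Q_def)
  then have "b1 = b2"
    using quadratic_pos_root_unique key[OF assms(1)] key[OF assms(2)] by simp
  moreover have "2 * a1 + b1 = 2 * a2 + b2"
    using assms by (auto simp: abmn_step_def)
  ultimately show ?thesis
    by simp
qed

lemma positive_ABMN_imp_abmn_step:
  assumes "positive_ABMN a b m n"
  shows "abmn_step (a i) (b i) (a (i + 1)) (b (i + 1))"
proof -
  have incr: "0 < a j" "0 < b j" "m (j + 1) - m j = 2 * a j + b j" "m j - m (j - 1) = a j^2 / b j"
    "n j - n (j + 1) = b j^2 / a j" "n (j - 1) - n j = a j + 2 * b j" for j
    using assms unfolding positive_ABMN_iff_increments by blast+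
  have "a (i + 1)^2 / b (i + 1) = 2 * a i + b i" "b i^2 / a i = a (i + 1) + 2 * b (i + 1)"
    using incr(3,4,5,6)[of i] incr(3,4,5,6)[of "i + 1"] by simp_all
  then show ?thesis
    using incr(1,2)[of i] incr(1,2)[of "i + 1"] by (simp add: abmn_step_def field_simps)
qed

lemma int_chain_exists:
  assumes "P s"
    and successor: "\<And>x. P x \<Longrightarrow> \<exists>y. P y \<and> R x y"
    and predecessor: "\<And>y. P y \<Longrightarrow> \<exists>x. P x \<and> R x y"
  shows "\<exists>f. f 0 = s \<and> (\<forall>i::int. R (f i) (f (i + 1)))"
proof -
  define forward where "forward x = (SOME y. P y \<and> R x y)" for x
  define backward where "backward y = (SOME x. P x \<and> R x y)" for y
  have forward: "P (forward x) \<and> R x (forward x)" if "P x" for x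
    unfolding forward_def using someI_ex[OF successor[OF that]] .
  have backward: "P (backward y) \<and> R (backward y) y" if "P y" for y
    unfolding backward_def using someI_ex[OF predecessor[OF that]] .
  have P_forward: "P ((forward ^^ k) s)" and P_backward: "P ((backward ^^ k) s)" for k
    by (induction k) (simp_all add: assms(1) forward backward)
  define f where "f i = (if 0 \<le> i then (forward ^^ nat i) s else (backward ^^ nat (- i)) s)" for i
  have "R (f i) (f (i + 1))" for i
  proof (cases "0 \<le> i")
    case True
    then have "nat (i + 1) = Suc (nat i)"
      by simp
    then show ?thesis
      using True forward[OF P_forward] by (simp add: f_def)
  next
    case False
    then have "nat (- i) = Suc (nat (- (i + 1)))" "f (i + 1) = (backward ^^ nat (- (i + 1))) s"
      by (auto simp: f_def)
    then show ?thesis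
      using False backward[OF P_backward] by (simp add: f_def)
  qed
  then show ?thesis
    by (intro exI[of _ f]) (simp add: f_def)
qed

lemma int_chain_unique:
  assumes "\<And>x y y'. R x y \<Longrightarrow> R x y' \<Longrightarrow> y = y'"
    and "\<And>x x' y. R x y \<Longrightarrow> R x' y \<Longrightarrow> x = x'"
    and "\<And>i::int. R (f i) (f (i + 1))" "\<And>i. R (g i) (g (i + 1))" "f 0 = g 0"
  shows "f = g"
proof
  fix i
  show "f i = g i"
  proof (induction i rule: int_induct[where k = 0])
    case (step1 i)
    then show ?case
      using assms(1,3,4) by metis
  next
    case (step2 i)
    then show ?case
      using assms(2)[of "f (i - 1)" "f i" "g (i - 1)"] assms(3,4)[of "i - 1"] by simp
  qed (fact assms(5))
qed

lemma abmn_step_chain_exists: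
  fixes a0 b0 :: real
  assumes "0 < a0" "0 < b0"
  shows "\<exists>a b. a 0 = a0 \<and> b 0 = b0 \<and> (\<forall>i::int. abmn_step (a i) (b i) (a (i + 1)) (b (i + 1)))"
proof -
  have "\<exists>f. f 0 = (a0, b0) \<and>
      (\<forall>i::int. abmn_step (fst (f i)) (snd (f i)) (fst (f (i + 1))) (snd (f (i + 1))))"
  proof (rule int_chain_exists[where P = "\<lambda>p. 0 < fst p \<and> 0 < snd p"])
    fix p :: "real \<times> real"
    assume "0 < fst p \<and> 0 < snd p"
    then obtain a' b' where "abmn_step (fst p) (snd p) a' b'"
      using abmn_step_successor_exists by blast
    then show "\<exists>q. (0 < fst q \<and> 0 < snd q) \<and> abmn_step (fst p) (snd p) (fst q) (snd q)"
      by (intro exI[of _ "(a', b')"]) (simp add: abmn_step_def)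
  next
    fix q :: "real \<times> real"
    assume "0 < fst q \<and> 0 < snd q"
    then obtain a b where "abmn_step a b (fst q) (snd q)"
      using abmn_step_predecessor_exists by blast
    then show "\<exists>p. (0 < fst p \<and> 0 < snd p) \<and> abmn_step (fst p) (snd p) (fst q) (snd q)"
      by (intro exI[of _ "(a, b)"]) (simp add: abmn_step_def)
  qed (use assms in simp)
  then obtain f where "f 0 = (a0, b0)"
    "\<forall>i::int. abmn_step (fst (f i)) (snd (f i)) (fst (f (i + 1))) (snd (f (i + 1)))"
    by blast
  then show ?thesis
    by (intro exI[of _ "\<lambda>i. fst (f i)"] exI[of _ "\<lambda>i. snd (f i)"]) simp
qed

lemma abmn_step_chain_unique:
  assumes "\<And>i::int. abmn_step (a i) (b i) (a (i + 1)) (b (i + 1))"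
    and "\<And>i. abmn_step (a' i) (b' i) (a' (i + 1)) (b' (i + 1))"
    and "a 0 = a' 0" "b 0 = b' 0"
  shows "a = a' \<and> b = b'"
proof -
  have "(\<lambda>i. (a i, b i)) = (\<lambda>i. (a' i, b' i))"
  proof (rule int_chain_unique[where R = "\<lambda>p q. abmn_step (fst p) (snd p) (fst q) (snd q)"])
    show "q = q'" if "abmn_step (fst p) (snd p) (fst q) (snd q)"
      "abmn_step (fst p) (snd p) (fst q') (snd q')" for p q q' :: "real \<times> real"
      using abmn_step_successor_unique[OF that] by (simp add: prod_eq_iff)
    show "p = p'" if "abmn_step (fst p) (snd p) (fst q) (snd q)"
      "abmn_step (fst p') (snd p') (fst q) (snd q)" for p p' q :: "real \<times> real"
      using abmn_step_predecessor_unique[OF that] by (simp add: prod_eq_iff)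
  qed (use assms in simp_all)
  then show ?thesis
    by (simp add: fun_eq_iff)
qed

definition tail_sum :: "(int \<Rightarrow> real) \<Rightarrow> int \<Rightarrow> real" where
  "tail_sum f i = (\<Sum>k. f (i + int k))"

lemma summable_int_tail_ratio:
  fixes f :: "int \<Rightarrow> real"
  assumes "c < 1" and "\<And>j. J \<le> j \<Longrightarrow> norm (f (j + 1)) \<le> c * norm (f j)"
  shows "summable (\<lambda>k. f (i + int k))"
proof (rule summable_ratio_test[OF assms(1), of "nat (J - i)"])
  fix k
  assume "nat (J - i) \<le> k"
  then show "norm (f (i + int (Suc k))) \<le> c * norm (f (i + int k))"
    using assms(2)[of "i + int k"] by (simp add: add_ac)
qed

lemma tail_sum_diff:
  assumes "summable (\<lambda>k. f (i + int k))"
  shows "tail_sum f i - tail_sum f (i + 1) = f i"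
proof -
  have "tail_sum f (i + 1) = (\<Sum>k. f (i + int (Suc k)))"
    unfolding tail_sum_def by (simp add: add_ac)
  also have "\<dots> = tail_sum f i - f i"
    using suminf_split_head[OF assms] by (simp add: tail_sum_def)
  finally show ?thesis
    by simp
qed

lemma tail_sum_tendsto_zero:
  assumes "summable (\<lambda>k. f (int k))"
  shows "(tail_sum f \<longlongrightarrow> 0) at_top"
proof (rule filterlim_int_of_nat_at_topD)
  have "tail_sum f (int n) = (\<Sum>k. f (int (k + n)))" for n
    by (simp add: tail_sum_def add.commute)
  then show "((\<lambda>n. tail_sum f (int n)) \<longlongrightarrow> 0) sequentially"
    using suminf_exist_split2[OF assms] by simp
qed

lemma eq_if_same_increments_and_limit:
  fixes f g :: "int \<Rightarrow> real"
  assumes "\<And>i. f (i + 1) - f i = g (i + 1) - g i" "(f \<longlongrightarrow> L) F" "(g \<longlongrightarrow> L) F" "F \<noteq> bot"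
  shows "f = g"
proof -
  have const: "(\<lambda>i. f i - g i) = (\<lambda>_. f 0 - g 0)"
  proof
    fix i
    show "f i - g i = f 0 - g 0"
    proof (induction i rule: int_induct[where k = 0])
      case (step1 i)
      then show ?case
        using assms(1)[of i] by linarith
    next
      case (step2 i)
      then show ?case
        using assms(1)[of "i - 1"] by simp
    qed simp
  qed
  have "((\<lambda>i. f i - g i) \<longlongrightarrow> L - L) F"
    using assms(2,3) by (rule tendsto_diff)
  then have "f 0 - g 0 = L - L"
    unfolding const tendsto_const_iff[OF assms(4)] .
  then have "f i - g i = 0" for i
    using fun_cong[OF const, of i] by simp
  then show ?thesis
    by (simp add: fun_eq_iff)
qed

locale abmn_orbit =
  fixes a b :: "int \<Rightarrow> real"
  assumes step: "abmn_step (a i) (b i) (a (i + 1)) (b (i + 1))"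
begin

lemma pos: "0 < a i" "0 < b i"
  using step[of i] by (auto simp: abmn_step_def)

definition ratio :: "int \<Rightarrow> real" where
  "ratio i = a i / b i"

lemma ratio_pos: "0 < ratio i"
  using pos by (simp add: ratio_def)

lemma ratio_recurrence: "ratio (i + 1)^2 / (ratio (i + 1) + 2) = ratio i * (2 * ratio i + 1)"
proof -
  have step_eqs: "a (i + 1)^2 = b (i + 1) * (2 * a i + b i)" "a (i + 1) + 2 * b (i + 1) = b i^2 / a i"
    using step[of i] by (auto simp: abmn_step_def field_simps)
  have "ratio (i + 1)^2 / (ratio (i + 1) + 2) = a (i + 1)^2 / (b (i + 1) * (a (i + 1) + 2 * b (i + 1)))"
    using pos[of "i + 1"] by (simp add: ratio_def field_simps power2_eq_square)
  also have "\<dots> = (2 * a i + b i) / (b i^2 / a i)"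
    using step_eqs pos[of "i + 1"] by simp
  also have "\<dots> = ratio i * (2 * ratio i + 1)"
    using pos[of i] by (simp add: ratio_def field_simps power2_eq_square)
  finally show ?thesis .
qed

lemma ratio_lower_step: "ratio i * (2 * ratio i + 1) \<le> ratio (i + 1)"
proof -
  have "ratio (i + 1)^2 / (ratio (i + 1) + 2) \<le> ratio (i + 1)"
    using ratio_pos[of "i + 1"] by (simp add: divide_le_eq algebra_simps power2_eq_square)
  then show ?thesis
    using ratio_recurrence[of i] by simp
qed

lemma ratio_upper_step: "ratio i \<le> ratio (i + 1) * (ratio (i + 1) / (ratio (i + 1) + 2))"
proof -
  have "ratio i \<le> ratio i * (2 * ratio i + 1)"
    using ratio_pos[of i] by simp
  also have "\<dots> = ratio (i + 1) * (ratio (i + 1) / (ratio (i + 1) + 2))"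
    using ratio_recurrence[of i] by (simp add: power2_eq_square)
  finally show ?thesis .
qed

lemma ratio_mono: "i \<le> j \<Longrightarrow> ratio i \<le> ratio j"
proof (induction j rule: int_ge_induct)
  case (step j)
  have "ratio j \<le> ratio j * (2 * ratio j + 1)"
    using ratio_pos[of j] by simp
  then show ?case
    using step.IH ratio_lower_step[of j] by linarith
qed simp

lemma ratio_geometric_growth: "(1 + 2 * ratio 0)^k * ratio 0 \<le> ratio (int k)"
proof (induction k)
  case (Suc k)
  have "(1 + 2 * ratio 0)^Suc k * ratio 0 \<le> (1 + 2 * ratio 0) * ratio (int k)"
    using Suc.IH ratio_pos[of 0] by (simp add: mult.assoc mult_left_mono)
  also have "\<dots> \<le> (1 + 2 * ratio (int k)) * ratio (int k)"
    using ratio_mono[of 0 "int k"] ratio_pos[of "int k"] by (intro mult_right_mono) auto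
  also have "\<dots> \<le> ratio (int (Suc k))"
    using ratio_lower_step[of "int k"] by (simp add: algebra_simps)
  finally show ?case .
qed simp

lemma ratio_geometric_decay: "ratio (- int k) \<le> (ratio 0 / (ratio 0 + 2))^k * ratio 0"
proof (induction k)
  case (Suc k)
  define r where "r = ratio (- int k)"
  have r: "0 < r" "r \<le> ratio 0"
    using ratio_pos ratio_mono[of "- int k" 0] by (simp_all add: r_def)
  have "ratio (- int (Suc k)) \<le> r * (r / (r + 2))"
    using ratio_upper_step[of "- int (Suc k)"] by (simp add: r_def)
  also have "\<dots> \<le> r * (ratio 0 / (ratio 0 + 2))"
    using r by (intro mult_left_mono) (simp_all add: field_simps)
  also have "\<dots> \<le> ((ratio 0 / (ratio 0 + 2))^k * ratio 0) * (ratio 0 / (ratio 0 + 2))"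
    using Suc.IH ratio_pos[of 0] by (intro mult_right_mono) (simp_all add: r_def)
  finally show ?case
    by (simp add: algebra_simps)
qed simp

lemma eventually_ratio_ge_two: "\<exists>J. \<forall>j\<ge>J. 2 \<le> ratio j"
proof -
  obtain k where "2 / ratio 0 < (1 + 2 * ratio 0)^k"
    using real_arch_pow[of "1 + 2 * ratio 0"] ratio_pos[of 0] by auto
  then have "2 \<le> ratio (int k)"
    using ratio_geometric_growth[of k] ratio_pos[of 0] by (simp add: pos_divide_less_eq)
  then show ?thesis
    using ratio_mono by (meson order_trans)
qed

lemma eventually_ratio_le_half: "\<exists>J. \<forall>j\<le>J. ratio j \<le> 1 / 2"
proof -
  obtain k where "(ratio 0 / (ratio 0 + 2))^k < 1 / (2 * ratio 0)"
    using real_arch_pow_inv[of "1 / (2 * ratio 0)" "ratio 0 / (ratio 0 + 2)"] ratio_pos[of 0] by auto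
  then have "ratio (- int k) \<le> 1 / 2"
    using ratio_geometric_decay[of k] ratio_pos[of 0] by (simp add: less_divide_eq)
  then show ?thesis
    using ratio_mono by (meson order_trans)
qed

definition m_increment :: "int \<Rightarrow> real" where
  "m_increment i = a i^2 / b i"

definition n_increment :: "int \<Rightarrow> real" where
  "n_increment i = b i^2 / a i"

lemma m_increment_pos: "0 < m_increment i"
  using pos[of i] by (simp add: m_increment_def)

lemma n_increment_pos: "0 < n_increment i"
  using pos[of i] by (simp add: n_increment_def)

lemma m_increment_succ: "m_increment (i + 1) = 2 * a i + b i"
  using step[of i] by (auto simp: m_increment_def abmn_step_def field_simps)

lemma n_increment_eq_succ: "n_increment i = a (i + 1) + 2 * b (i + 1)"
  using step[of i] by (auto simp: n_increment_def abmn_step_def field_simps)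

lemma m_increment_contraction: "m_increment i \<le> ratio i^2 * m_increment (i + 1)"
proof -
  have "m_increment i = ratio i^2 * b i"
    using pos[of i] by (simp add: m_increment_def ratio_def power2_eq_square)
  also have "\<dots> \<le> ratio i^2 * (2 * a i + b i)"
    using pos[of i] by (intro mult_left_mono) auto
  finally show ?thesis
    by (simp add: m_increment_succ)
qed

lemma n_increment_contraction: "n_increment (i + 1) \<le> n_increment i / ratio (i + 1)^2"
proof -
  have "n_increment (i + 1) = a (i + 1) / ratio (i + 1)^2"
    using pos[of "i + 1"] by (simp add: n_increment_def ratio_def power2_eq_square)
  also have "\<dots> \<le> (a (i + 1) + 2 * b (i + 1)) / ratio (i + 1)^2"
    using pos[of "i + 1"] by (intro divide_right_mono) auto
  finally show ?thesis
    by (simp add: n_increment_eq_succ)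
qed

lemma summable_m_increment: "summable (\<lambda>k. m_increment (- (i + int k)))"
proof -
  obtain J where J: "\<And>j. j \<le> J \<Longrightarrow> ratio j \<le> 1 / 2"
    using eventually_ratio_le_half by blast
  have contraction: "norm (m_increment (- (j + 1))) \<le> 1 / 4 * norm (m_increment (- j))"
    if "- J \<le> j" for j
  proof -
    define k where "k = - (j + 1)"
    have "k \<le> J" "- j = k + 1"
      using that by (simp_all add: k_def)
    have "ratio k^2 \<le> (1 / 2)^2"
      using J[OF \<open>k \<le> J\<close>] less_imp_le[OF ratio_pos] by (intro power_mono)
    have "m_increment k \<le> ratio k^2 * m_increment (k + 1)"
      by (rule m_increment_contraction)
    also have "\<dots> \<le> 1 / 4 * m_increment (k + 1)"
      using \<open>ratio k^2 \<le> (1 / 2)^2\<close> less_imp_le[OF m_increment_pos]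
      by (intro mult_right_mono) (simp_all add: power2_eq_square)
    finally show ?thesis
      unfolding k_def[symmetric] \<open>- j = k + 1\<close> using m_increment_pos[of k] m_increment_pos[of "k + 1"]
      by simp
  qed
  show ?thesis
    using summable_int_tail_ratio[where f = "\<lambda>j. m_increment (- j)", OF _ contraction] by simp
qed

lemma summable_n_increment: "summable (\<lambda>k. n_increment (i + int k))"
proof -
  obtain J where J: "\<And>j. J \<le> j \<Longrightarrow> 2 \<le> ratio j"
    using eventually_ratio_ge_two by blast
  have contraction: "norm (n_increment (j + 1)) \<le> 1 / 4 * norm (n_increment j)" if "J \<le> j" for j
  proof -
    have "2^2 \<le> ratio (j + 1)^2"
      using J[of "j + 1"] that by (intro power_mono) auto
    have "n_increment (j + 1) \<le> n_increment j / ratio (j + 1)^2"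
      by (rule n_increment_contraction)
    also have "\<dots> \<le> n_increment j / 4"
      using \<open>2^2 \<le> ratio (j + 1)^2\<close> less_imp_le[OF n_increment_pos] by (intro divide_left_mono) auto
    finally show ?thesis
      using n_increment_pos[of j] n_increment_pos[of "j + 1"] by simp
  qed
  show ?thesis
    using summable_int_tail_ratio[where f = n_increment, OF _ contraction] by simp
qed

definition m_seq :: "int \<Rightarrow> real" where
  "m_seq i = tail_sum (\<lambda>j. m_increment (- j)) (- i)"

definition n_seq :: "int \<Rightarrow> real" where
  "n_seq = tail_sum n_increment"

lemma m_seq_diff: "m_seq i - m_seq (i - 1) = m_increment i"
  using tail_sum_diff[OF summable_m_increment[of "- i"]] by (simp add: m_seq_def)

lemma n_seq_diff: "n_seq i - n_seq (i + 1) = n_increment i"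
  using tail_sum_diff[OF summable_n_increment[of i]] by (simp add: n_seq_def)

lemma m_seq_tendsto_zero: "(m_seq \<longlongrightarrow> 0) at_bot"
proof -
  have "(tail_sum (\<lambda>j. m_increment (- j)) \<longlongrightarrow> 0) at_top"
    using tail_sum_tendsto_zero summable_m_increment[of 0] by simp
  then have "((\<lambda>i. m_seq (- i)) \<longlongrightarrow> 0) at_top"
    by (simp add: m_seq_def)
  then show ?thesis
    unfolding filterlim_def at_bot_mirror filtermap_filtermap .
qed

lemma n_seq_tendsto_zero: "(n_seq \<longlongrightarrow> 0) at_top"
  using tail_sum_tendsto_zero summable_n_increment[of 0] by (simp add: n_seq_def)

lemma positive_ABMN_m_seq_n_seq: "positive_ABMN a b m_seq n_seq"
proof -
  have "m_seq (i + 1) - m_seq i = 2 * a i + b i" "n_seq (i - 1) - n_seq i = a i + 2 * b i" for i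
    using m_seq_diff[of "i + 1"] m_increment_succ[of i] n_seq_diff[of "i - 1"]
      n_increment_eq_succ[of "i - 1"] by simp_all
  then show ?thesis
    unfolding positive_ABMN_iff_increments
    using pos m_seq_diff n_seq_diff by (simp add: m_increment_def n_increment_def)
qed

lemma default_ABMN_m_seq_n_seq:
  assumes "b 0 = a 0^2"
  shows "default_ABMN a b m_seq n_seq \<and> central_ratio m_seq n_seq = a 0 + 2 * b 0"
proof -
  have "m_seq 0 - m_seq (- 1) = 1"
    using m_seq_diff[of 0] assms pos[of 0] by (simp add: m_increment_def)
  moreover have "n_seq (- 1) - n_seq 0 = a 0 + 2 * b 0"
    using n_seq_diff[of "- 1"] n_increment_eq_succ[of "- 1"] by simp
  ultimately show ?thesis
    unfolding default_ABMN_def central_ratio_def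
    using positive_ABMN_m_seq_n_seq m_seq_tendsto_zero n_seq_tendsto_zero by simp
qed

end

lemma default_ABMN_central_ratio:
  assumes "default_ABMN a b m n"
  shows "0 < a 0 \<and> b 0 = a 0^2 \<and> central_ratio m n = a 0 + 2 * b 0"
proof -
  have incr: "0 < a i" "0 < b i" "m i - m (i - 1) = a i^2 / b i" "n (i - 1) - n i = a i + 2 * b i"
    for i
    using assms unfolding default_ABMN_def positive_ABMN_iff_increments by blast+
  moreover have "m 0 - m (- 1) = 1"
    using assms by (simp add: default_ABMN_def)
  ultimately show ?thesis
    using incr(3,4)[of 0] by (simp add: central_ratio_def)
qed

lemma default_ABMN_unique:
  assumes default: "default_ABMN a b m n" "default_ABMN a' b' m' n'"
    and "central_ratio m n = central_ratio m' n'"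
  shows "a = a' \<and> b = b' \<and> m = m' \<and> n = n'"
proof -
  have positive: "positive_ABMN a b m n" "positive_ABMN a' b' m' n'"
    using default by (simp_all add: default_ABMN_def)
  note central = default_ABMN_central_ratio[OF default(1)] default_ABMN_central_ratio[OF default(2)]
  have "2 * a 0^2 + 1 * a 0 = 2 * a' 0^2 + 1 * a' 0"
    using central assms(3) by simp
  then have "a 0 = a' 0"
    using quadratic_pos_root_unique[of 1 "a 0" "a' 0"] central by simp
  then have ab: "a = a'" "b = b'"
    using abmn_step_chain_unique[of a b a' b'] positive_ABMN_imp_abmn_step[OF positive(1)]
      positive_ABMN_imp_abmn_step[OF positive(2)] central by simp_all
  have "m (i + 1) - m i = m' (i + 1) - m' i \<and> n (i + 1) - n i = n' (i + 1) - n' i" for i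
  proof -
    have "m (i + 1) - m i = 2 * a i + b i" "n i - n (i + 1) = b i^2 / a i"
      "m' (i + 1) - m' i = 2 * a i + b i" "n' i - n' (i + 1) = b i^2 / a i"
      using positive unfolding ab positive_ABMN_iff_increments by blast+
    then show ?thesis
      by linarith
  qed
  then have "m = m'" "n = n'"
    using default eq_if_same_increments_and_limit[OF _ _ _ trivial_limit_at_bot_linorder, of m m' 0]
      eq_if_same_increments_and_limit[OF _ _ _ trivial_limit_at_top_linorder, of n n' 0]
    by (simp_all add: default_ABMN_def)
  with ab show ?thesis
    by simp
qed

lemma default_ABMN_exists:
  assumes "0 < x"
  shows "\<exists>a b m n. default_ABMN a b m n \<and> central_ratio m n = x"
proof -
  obtain y where y: "0 < y" "2 * y^2 + 1 * y = 1 * x"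
    using quadratic_pos_root_exists[of 1 x] assms by auto
  moreover have "0 < y^2"
    using y by simp
  ultimately obtain a b :: "int \<Rightarrow> real" where ab: "a 0 = y" "b 0 = y^2"
    "\<forall>i. abmn_step (a i) (b i) (a (i + 1)) (b (i + 1))"
    using abmn_step_chain_exists[of y "y^2"] by blast
  interpret abmn_orbit a b
    using ab(3) by unfold_locales blast
  have "default_ABMN a b m_seq n_seq \<and> central_ratio m_seq n_seq = a 0 + 2 * b 0"
    using ab by (intro default_ABMN_m_seq_n_seq) simp
  moreover have "a 0 + 2 * b 0 = x"
    using ab y(2) by simp
  ultimately show ?thesis
    by blast
qed

theorem mainTheorem8:
  shows "(\<forall>a b m n. default_ABMN a b m n \<longrightarrow> central_ratio m n > 0)
    \<and> (\<forall>x::real. x > 0 \<longrightarrow>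
         (\<exists>!s. default_ABMN (fst s) (fst (snd s)) (fst (snd (snd s))) (snd (snd (snd s)))
               \<and> central_ratio (fst (snd (snd s))) (snd (snd (snd s))) = x))"
proof (intro conjI allI impI)
  fix a b m n
  assume "default_ABMN a b m n"
  then show "central_ratio m n > 0"
    using default_ABMN_central_ratio[of a b m n] by (simp add: add_pos_nonneg)
next
  fix x :: real
  assume "x > 0"
  then obtain a b m n where abmn: "default_ABMN a b m n" "central_ratio m n = x"
    using default_ABMN_exists by blast
  show "\<exists>!s. default_ABMN (fst s) (fst (snd s)) (fst (snd (snd s))) (snd (snd (snd s)))
               \<and> central_ratio (fst (snd (snd s))) (snd (snd (snd s))) = x"
  proof (rule ex1I[of _ "(a, b, m, n)"])
    fix s :: "(int \<Rightarrow> real) \<times> (int \<Rightarrow> real) \<times> (int \<Rightarrow> real) \<times> (int \<Rightarrow> real)"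
    assume "default_ABMN (fst s) (fst (snd s)) (fst (snd (snd s))) (snd (snd (snd s)))
               \<and> central_ratio (fst (snd (snd s))) (snd (snd (snd s))) = x"
    then have "a = fst s \<and> b = fst (snd s) \<and> m = fst (snd (snd s)) \<and> n = snd (snd (snd s))"
      using default_ABMN_unique[OF abmn(1)] abmn(2) by blast
    then show "s = (a, b, m, n)"
      by (simp add: prod_eq_iff)
  qed (use abmn in simp)
qed

end
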